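(* Let $\Gamma$ be a set and $\Lambda:\Gamma\to\mathbb R^{m\times n}$ with sparsity pattern $S$. Let $L\in\mathbb R^{m\times m}$ be invertible and let $\hat S$ be the sparsity pattern of $\hat\Lambda(\cdot):=L^\top\Lambda(\cdot)$. Let $\sigma$ be a permutation of $\{1,\dots,m\}$ with $L_{i,\sigma(i)}\ne0$ for all $i$ and $P$ its permutation matrix, $Pe_i=e_{\sigma(i)}$. Assume that for every $j\in\{1,\dots,n\}$, $\operatorname{span}(\Lambda_{\cdot,j}(\Gamma))=\mathbb R^m_{S_{\cdot,j}}$. Then $S\subset P^\top\hat S$ (as sets of nonzero entries). If moreover $\|\hat S\|_0\le\|S\|_0$, then $S=P^\top\hat S$ and $L=CP^\top$ for some $S$-consistent matrix $C$.
   Context: Sparsity pattern: for $\Lambda:\Gamma\to\mathbb R^{m\times n}$, the binary matrix $S$ with $S_{i,j}=1$ iff there exists $\gamma\in\Gamma$ with $\Lambda_{i,j}(\gamma)\neq0$. $\Lambda_{\cdot,j}$ denotes the $j$-th column. For a binary vector $b\in\{0,1\}^m$, $\mathbb R^m_b=\{x\in\mathbb R^m: b_i=0\Rightarrow x_i=0\}$; $S_{\cdot,j}$ is the $j$-th column of $S$. $\|\cdot\|_0$ counts nonzero entries. $S$-consistency: for $S\in\{0,1\}^{m\times n}$, $C\in\mathbb R^{m\times m}$ is $S$-consistent iff for all $i,j$: $[\mathbb 1-S(\mathbb 1-S)^\top]^+_{i,j}=0\Rightarrow C_{i,j}=0$, with $[\cdot]^+=\max\{0,\cdot\}$ entrywise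 and $\mathbb 1$ an all-ones matrix of appropriate size. *)

theory Defs
  imports "HOL-Analysis.Analysis"
begin

text \<open>Matrices in R^(m x n) are rendered as real^'n^'m (rows indexed by 'm, columns by 'n).
Binary matrices are real matrices with entries in {0,1}.\<close>

definition sparsity_pattern :: "'g set \<Rightarrow> ('g \<Rightarrow> real^'n^'m) \<Rightarrow> real^'n^'m" where
  "sparsity_pattern \<Gamma> \<Lambda> = (\<chi> i j. if \<exists>\<gamma>\<in>\<Gamma>. \<Lambda> \<gamma> $ i $ j \<noteq> 0 then 1 else 0)"

definition masked_space :: "real^'m \<Rightarrow> (real^'m) set" where
  "masked_space b = {x. \<forall>i. b $ i = 0 \<longrightarrow> x $ i = 0}"

definition perm_matrix :: "('m \<Rightarrow> 'm) \<Rightarrow> real^'m^'m" where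
  "perm_matrix \<sigma> = (\<chi> k i. if k = \<sigma> i then 1 else 0)"

definition nonzeros :: "real^'n^'m \<Rightarrow> ('m \<times> 'n) set" where
  "nonzeros A = {(i, j). A $ i $ j \<noteq> 0}"

definition norm0 :: "real^'n^'m \<Rightarrow> nat" where
  "norm0 A = card (nonzeros A)"

definition ones_mat :: "real^'n^'m" where
  "ones_mat = (\<chi> i j. 1)"

definition pos_part :: "real^'n^'m \<Rightarrow> real^'n^'m" where
  "pos_part A = (\<chi> i j. max 0 (A $ i $ j))"

definition S_consistent :: "real^'n^'m \<Rightarrow> real^'m^'m \<Rightarrow> bool" where
  "S_consistent S C \<longleftrightarrow>
     (\<forall>i j. pos_part ((ones_mat :: real^'m^'m) - S ** transpose ((ones_mat :: real^'n^'m) - S)) $ i $ j = 0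
            \<longrightarrow> C $ i $ j = 0)"

end

theory Submission
  imports Defs
begin

text \<open>Write \<open>\<hat>S\<close> for the pattern of \<open>L\<^sup>T \<Lambda>\<close>. Because the samples of column \<open>j\<close>
  span the whole coordinate subspace selected by column \<open>j\<close> of \<open>S\<close>, a vector orthogonal to all
  of them vanishes wherever that column of \<open>S\<close> is nonzero. An entry \<open>\<hat>S k j = 0\<close> says exactly
  that column \<open>k\<close> of \<open>L\<close> is such a vector, so \<open>S i j \<noteq> 0\<close> and \<open>\<hat>S k j = 0\<close> force
  \<open>L i k = 0\<close>. With \<open>k = \<sigma> i\<close> this gives \<open>S \<subseteq> P\<^sup>T \<hat>S\<close>. As \<open>P\<^sup>T\<close> only permutes rows,
  counting nonzeros upgrades the inclusion to equality, and then the same implication says that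
  \<open>C = L P\<close> vanishes at \<open>(i, k)\<close> whenever row \<open>i\<close> of \<open>S\<close> is not contained in row \<open>k\<close>,
  which is \<open>S\<close>-consistency.\<close>

lemma sparsity_pattern_nth:
  "sparsity_pattern \<Gamma> \<Lambda> $ i $ j = (if \<exists>\<gamma>\<in>\<Gamma>. \<Lambda> \<gamma> $ i $ j \<noteq> 0 then 1 else 0)"
  by (simp add: sparsity_pattern_def)

lemma sparsity_pattern_binary:
  "sparsity_pattern \<Gamma> \<Lambda> $ i $ j = 0 \<or> sparsity_pattern \<Gamma> \<Lambda> $ i $ j = 1"
  by (simp add: sparsity_pattern_nth)

lemma transpose_perm_matrix_mult_nth:
  "(transpose (perm_matrix \<sigma>) ** M) $ i $ j = M $ \<sigma> i $ j"
proof -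
  have "(transpose (perm_matrix \<sigma>) ** M) $ i $ j
        = (\<Sum>k\<in>UNIV. (if k = \<sigma> i then 1 else 0) * M $ k $ j)"
    by (simp add: matrix_matrix_mult_def transpose_def perm_matrix_def)
  also have "\<dots> = (\<Sum>k\<in>UNIV. if k = \<sigma> i then M $ k $ j else 0)"
    by (rule sum.cong) auto
  finally show ?thesis by simp
qed

lemma mult_transpose_perm_matrix:
  assumes "\<sigma> permutes UNIV"
  shows "(\<chi> i k. A $ i $ \<sigma> k) ** transpose (perm_matrix \<sigma>) = A"
proof -
  have "((\<chi> i k. A $ i $ \<sigma> k) ** transpose (perm_matrix \<sigma>)) $ i $ l = A $ i $ l" for i l
  proof -
    have "((\<chi> i k. A $ i $ \<sigma> k) ** transpose (perm_matrix \<sigma>)) $ i $ l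
          = (\<Sum>k\<in>UNIV. (\<lambda>k'. if l = k' then A $ i $ k' else 0) (\<sigma> k))"
      by (simp add: matrix_matrix_mult_def transpose_def perm_matrix_def if_distrib cong: if_cong)
    also have "\<dots> = (\<Sum>k\<in>UNIV. if l = k then A $ i $ k else 0)"
      using sum.permute[OF assms, of "\<lambda>k'. if l = k' then A $ i $ k' else 0"] by (simp add: comp_def)
    finally show ?thesis by simp
  qed
  then show ?thesis by (simp add: vec_eq_iff)
qed

lemma norm0_transpose_perm_matrix_mult:
  assumes "\<sigma> permutes UNIV"
  shows "norm0 (transpose (perm_matrix \<sigma>) ** M) = norm0 M"
proof -
  have "nonzeros M = (\<lambda>(i, j). (\<sigma> i, j)) ` nonzeros (transpose (perm_matrix \<sigma>) ** M)"
  proof (auto simp: nonzeros_def transpose_perm_matrix_mult_nth image_iff)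
    fix a b
    assume "M $ a $ b \<noteq> 0"
    moreover have "\<sigma> (inv \<sigma> a) = a"
      using permutes_inverses(1)[OF assms] by simp
    ultimately show "\<exists>x. M $ \<sigma> x $ b \<noteq> 0 \<and> a = \<sigma> x"
      by metis
  qed
  moreover have "inj_on (\<lambda>(i, j). (\<sigma> i, j)) (nonzeros (transpose (perm_matrix \<sigma>) ** M))"
    using permutes_inj[OF assms] by (auto simp: inj_on_def inj_def)
  ultimately show ?thesis
    unfolding norm0_def by (simp add: card_image)
qed

lemma binary_matrix_eqI:
  fixes A B :: "real^'n^'m"
  assumes "\<And>i j. A $ i $ j = 0 \<or> A $ i $ j = 1"
    and "\<And>i j. B $ i $ j = 0 \<or> B $ i $ j = 1"
    and "nonzeros A = nonzeros B"
  shows "A = B"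
proof -
  have "A $ i $ j = B $ i $ j" for i j
  proof -
    have "A $ i $ j \<noteq> 0 \<longleftrightarrow> B $ i $ j \<noteq> 0"
      using assms(3) by (auto simp: nonzeros_def set_eq_iff)
    then show ?thesis
      using assms(1,2)[of i j] by auto
  qed
  then show ?thesis by (simp add: vec_eq_iff)
qed

lemma S_consistentI:
  fixes S :: "real^'n^'m"
  assumes "\<And>i j. S $ i $ j = 0 \<or> S $ i $ j = 1"
    and "\<And>i k j. S $ i $ j \<noteq> 0 \<Longrightarrow> S $ k $ j = 0 \<Longrightarrow> C $ i $ k = 0"
  shows "S_consistent S C"
  unfolding S_consistent_def
proof (intro allI impI)
  fix i k
  assume "pos_part ((ones_mat :: real^'m^'m) - S ** transpose ((ones_mat :: real^'n^'m) - S)) $ i $ k = 0"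
  then have "(\<Sum>j\<in>UNIV. S $ i $ j * (1 - S $ k $ j)) \<ge> 1"
    by (simp add: pos_part_def ones_mat_def matrix_matrix_mult_def transpose_def)
  then have "(\<Sum>j\<in>UNIV. S $ i $ j * (1 - S $ k $ j)) \<noteq> 0"
    by linarith
  then obtain j where "S $ i $ j * (1 - S $ k $ j) \<noteq> 0"
    by (meson sum.neutral)
  then have "S $ i $ j \<noteq> 0" and "S $ k $ j = 0"
    using assms(1)[of k j] by auto
  then show "C $ i $ k = 0" by (rule assms(2))
qed

lemma orthogonal_to_masked_span_nth:
  assumes "span X = masked_space b"
    and "\<forall>x\<in>X. v \<bullet> x = 0"
    and "b $ i \<noteq> 0"
  shows "v $ i = 0"
proof -
  have "axis i 1 \<in> span X"
    using assms(1,3) by (auto simp: masked_space_def axis_def)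
  then have "orthogonal v (axis i 1)"
    by (rule orthogonal_to_span) (use assms(2) in \<open>auto simp: orthogonal_def\<close>)
  then show ?thesis by (simp add: orthogonal_def inner_axis)
qed

lemma transformed_sparsity_pattern_zero_imp:
  fixes \<Lambda> :: "'g \<Rightarrow> real^'n^'m" and L :: "real^'m^'m"
  assumes "span ((\<lambda>\<gamma>. column j (\<Lambda> \<gamma>)) ` \<Gamma>) = masked_space (column j (sparsity_pattern \<Gamma> \<Lambda>))"
    and "sparsity_pattern \<Gamma> \<Lambda> $ i $ j \<noteq> 0"
    and "sparsity_pattern \<Gamma> (\<lambda>\<gamma>. transpose L ** \<Lambda> \<gamma>) $ k $ j = 0"
  shows "L $ i $ k = 0"
proof -
  have "(transpose L ** A) $ k $ j = column k L \<bullet> column j A" for A :: "real^'n^'m"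
    by (simp add: matrix_matrix_mult_def transpose_def column_def inner_vec_def)
  then have "\<forall>x\<in>(\<lambda>\<gamma>. column j (\<Lambda> \<gamma>)) ` \<Gamma>. column k L \<bullet> x = 0"
    using assms(3) by (auto simp: sparsity_pattern_nth split: if_splits)
  with assms(1) have "column k L $ i = 0"
    by (rule orthogonal_to_masked_span_nth) (use assms(2) in \<open>simp add: column_def\<close>)
  then show ?thesis by (simp add: column_def)
qed

theorem mainTheorem4:
  fixes \<Gamma> :: "'g set" and \<Lambda> :: "'g \<Rightarrow> real^'n^'m"
    and L :: "real^'m^'m" and \<sigma> :: "'m \<Rightarrow> 'm"
  assumes "invertible L"
    and "\<sigma> permutes UNIV"
    and "\<forall>i. L $ i $ \<sigma> i \<noteq> 0"
    and "\<forall>j. span ((\<lambda>\<gamma>. column j (\<Lambda> \<gamma>)) ` \<Gamma>)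
               = masked_space (column j (sparsity_pattern \<Gamma> \<Lambda>))"
  shows "nonzeros (sparsity_pattern \<Gamma> \<Lambda>)
           \<subseteq> nonzeros (transpose (perm_matrix \<sigma>) ** sparsity_pattern \<Gamma> (\<lambda>\<gamma>. transpose L ** \<Lambda> \<gamma>))
    \<and> (norm0 (sparsity_pattern \<Gamma> (\<lambda>\<gamma>. transpose L ** \<Lambda> \<gamma>)) \<le> norm0 (sparsity_pattern \<Gamma> \<Lambda>)
       \<longrightarrow> sparsity_pattern \<Gamma> \<Lambda>
             = transpose (perm_matrix \<sigma>) ** sparsity_pattern \<Gamma> (\<lambda>\<gamma>. transpose L ** \<Lambda> \<gamma>)
         \<and> (\<exists>C. S_consistent (sparsity_pattern \<Gamma> \<Lambda>) C \<and> L = C ** transpose (perm_matrix \<sigma>)))"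
proof -
  define S where "S = sparsity_pattern \<Gamma> \<Lambda>"
  define PSh where "PSh = transpose (perm_matrix \<sigma>) ** sparsity_pattern \<Gamma> (\<lambda>\<gamma>. transpose L ** \<Lambda> \<gamma>)"
  have zero_imp: "S $ i $ j \<noteq> 0 \<Longrightarrow> PSh $ k $ j = 0 \<Longrightarrow> L $ i $ \<sigma> k = 0" for i j k
    using transformed_sparsity_pattern_zero_imp[OF assms(4)[rule_format]]
    by (simp add: S_def PSh_def transpose_perm_matrix_mult_nth)
  have sub: "nonzeros S \<subseteq> nonzeros PSh"
    using zero_imp assms(3) by (auto simp: nonzeros_def)
  moreover have "S = PSh \<and> (\<exists>C. S_consistent S C \<and> L = C ** transpose (perm_matrix \<sigma>))"
    if "norm0 (sparsity_pattern \<Gamma> (\<lambda>\<gamma>. transpose L ** \<Lambda> \<gamma>)) \<le> norm0 S"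
  proof
    have "norm0 PSh \<le> norm0 S"
      using that by (simp add: PSh_def norm0_transpose_perm_matrix_mult[OF assms(2)])
    then have "nonzeros S = nonzeros PSh"
      using sub card_mono[OF finite sub] by (intro card_subset_eq) (auto simp: norm0_def)
    then show "S = PSh"
      by (intro binary_matrix_eqI)
        (simp_all add: S_def PSh_def sparsity_pattern_binary transpose_perm_matrix_mult_nth)
    have "S_consistent S (\<chi> i k. L $ i $ \<sigma> k)"
    proof (rule S_consistentI)
      show "S $ i $ j = 0 \<or> S $ i $ j = 1" for i j
        by (simp add: S_def sparsity_pattern_binary)
      show "(\<chi> i k. L $ i $ \<sigma> k) $ i $ k = 0" if "S $ i $ j \<noteq> 0" "S $ k $ j = 0" for i k j
        using zero_imp[OF that(1)] that(2) \<open>S = PSh\<close> by simp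
    qed
    then show "\<exists>C. S_consistent S C \<and> L = C ** transpose (perm_matrix \<sigma>)"
      using mult_transpose_perm_matrix[OF assms(2)] by metis
  qed
  ultimately show ?thesis unfolding S_def PSh_def by blast
qed

end
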